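(* For all integers $k\geq 1$ and $n\geq 0$, \[ f_{n}^{(k)}= \sum_{j=0}^{\lfloor n/(k+1)\rfloor} (-1)^j\,\frac{(n-jk)+j+\delta_{n,0}}{2(n-jk)+\delta_{n,0}}\, \binom{n-jk}{j}\, 2^{n-j(k+1)}, \] where $\delta_{n,0}$ is the Kronecker delta ($\delta_{n,0}=1$ if $n=0$ and $0$ otherwise).
   Context: For an integer $k\geq 1$, the $k$-bonacci numbers $f_n^{(k)}$ ($n\in\mathbb{Z}$) are defined by $f_n^{(k)}=0$ for $n<0$, $f_0^{(k)}=1$, and $f_n^{(k)}=\sum_{i=1}^{k} f_{n-i}^{(k)}$ for $n\geq 1$. Here $\lfloor x\rfloor$ is the floor function. *)

theory Defs
  imports Complex_Main
begin

function kbonacci :: "nat \<Rightarrow> int \<Rightarrow> int" where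
  "kbonacci k n =
     (if n < 0 then 0
      else if n = 0 then 1
      else (\<Sum>i\<in>{1..k}. kbonacci k (n - int i)))"
  by auto
termination
  by (relation "measure (\<lambda>(k, n). nat (n + 1))") auto

end

theory Submission
  imports Defs
begin

(* Let b_n = sum_j (-1)^j C(n - jk, j) 2^(n - j(k+1)), extended by 0 to negative n (kb_psum).
  Its generating function is 1/(1 - 2z + z^(k+1)) = 1/((1 - z)(1 - z - ... - z^k)), so b_n is the
  n-th partial sum of the k-bonacci numbers: Pascal's rule gives b_n = 2 b_(n-1) - b_(n-k-1), and
  telescoping the k-bonacci recursion against it gives f_n = b_n - b_(n-1).
  Since j C(m, j) = m C(m-1, j-1), the j-th summand of the formula is half the difference of the
  j-th term of b_n and the (j-1)-th term of b_(n-k-1); hence the sum is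
  (b_n - b_(n-k-1))/2 = b_n - b_(n-1) = f_n. *)

declare kbonacci.simps [simp del]

lemma weighted_binomial_eq_average:
  "(real (Suc m) + real (Suc j)) / (2 * real (Suc m)) * real (Suc m choose Suc j)
     = (real (Suc m choose Suc j) + real (m choose j)) / 2"
proof -
  have "real (Suc m) * real (m choose j) = real (Suc m choose Suc j) * real (Suc j)"
    using Suc_times_binomial_eq[of m j] by (metis of_nat_mult)
  then show ?thesis
    by (simp add: field_simps)
qed

definition kb_term :: "nat \<Rightarrow> nat \<Rightarrow> nat \<Rightarrow> int" where
  "kb_term k n j = (-1) ^ j * int ((n - j * k) choose j) * 2 ^ (n - j * (k + 1))"

definition kb_psum :: "nat \<Rightarrow> int \<Rightarrow> int" where
  "kb_psum k x = (if x < 0 then 0 else (\<Sum>j\<le>nat x. kb_term k (nat x) j))"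

lemma kb_term_eq_0:
  assumes "n < j * (k + 1)"
  shows "kb_term k n j = 0"
proof -
  have "n - j * k < j"
    using assms by (cases j) auto
  then show ?thesis
    by (simp add: kb_term_def)
qed

lemma sum_kb_term_eq_kb_psum:
  assumes "n div (k + 1) \<le> N"
  shows "(\<Sum>j\<le>N. kb_term k n j) = kb_psum k (int n)"
proof -
  have "kb_term k n j = 0" if "n div (k + 1) < j" for j
    using that by (intro kb_term_eq_0) (simp add: div_less_iff_less_mult)
  then have "(\<Sum>j\<le>M. kb_term k n j) = (\<Sum>j\<le>n div (k + 1). kb_term k n j)"
    if "n div (k + 1) \<le> M" for M
    using that by (intro sum.mono_neutral_right) auto
  from this[OF assms] this[OF div_le_dividend] show ?thesis
    by (simp add: kb_psum_def)
qed

lemma kb_term_Suc_Suc: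
  "kb_term k (Suc n) (Suc j) =
     2 * kb_term k n (Suc j) - (if k \<le> n then kb_term k (n - k) j else 0)"
proof (cases "Suc j * (k + 1) \<le> Suc n")
  case False
  then have "kb_term k (Suc n) (Suc j) = 0" "kb_term k n (Suc j) = 0"
    "k \<le> n \<Longrightarrow> kb_term k (n - k) j = 0"
    by (auto intro!: kb_term_eq_0)
  then show ?thesis
    by simp
next
  case True
  then obtain e where n: "Suc n = Suc j * (k + 1) + e"
    using le_Suc_ex by blast
  then show ?thesis
    by (cases e) (simp_all add: kb_term_def algebra_simps)
qed

lemma kb_psum_Suc:
  "kb_psum k (int (Suc n)) = 2 * kb_psum k (int n) - kb_psum k (int n - int k)"
proof -
  have "kb_psum k (int (Suc n)) = kb_term k (Suc n) 0 + (\<Sum>j\<le>n. kb_term k (Suc n) (Suc j))"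
    by (simp add: kb_psum_def sum.atMost_Suc_shift del: sum.atMost_Suc of_nat_Suc)
  also have "\<dots> = 2 * (kb_term k n 0 + (\<Sum>j\<le>n. kb_term k n (Suc j)))
      - (if k \<le> n then \<Sum>j\<le>n. kb_term k (n - k) j else 0)"
    by (simp add: kb_term_Suc_Suc sum_subtractf sum_distrib_left kb_term_def[of k _ 0])
  also have "kb_term k n 0 + (\<Sum>j\<le>n. kb_term k n (Suc j)) = kb_psum k (int n)"
    using sum_kb_term_eq_kb_psum[OF le_SucI[OF div_le_dividend]]
    by (simp add: sum.atMost_Suc_shift del: sum.atMost_Suc)
  also have "(if k \<le> n then \<Sum>j\<le>n. kb_term k (n - k) j else 0) = kb_psum k (int n - int k)"
  proof (cases "k \<le> n")
    case True
    have "(n - k) div (k + 1) \<le> n"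
      using div_le_dividend[of "n - k" "k + 1"] by linarith
    with True show ?thesis
      by (simp add: sum_kb_term_eq_kb_psum flip: of_nat_diff)
  qed (simp add: kb_psum_def)
  finally show ?thesis .
qed

lemma kb_psum_rec:
  assumes "0 < x"
  shows "kb_psum k x = 2 * kb_psum k (x - 1) - kb_psum k (x - int k - 1)"
  using assms kb_psum_Suc[of k "nat (x - 1)"] by (simp add: algebra_simps)

lemma kbonacci_eq_kb_psum_diff: "kbonacci k x = kb_psum k x - kb_psum k (x - 1)"
proof (induction k x rule: kbonacci.induct)
  case (1 k x)
  consider "x < 0" | "x = 0" | "x > 0"
    by linarith
  then show ?case
  proof cases
    case 1
    then show ?thesis
      by (simp add: kbonacci.simps kb_psum_def)
  next
    case 2
    then show ?thesis
      by (simp add: kbonacci.simps kb_psum_def kb_term_def)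
  next
    case 3
    have "kbonacci k x = (\<Sum>i = 1..k. kb_psum k (x - int i) - kb_psum k (x - int i - 1))"
      using 3 "1.IH" by (simp add: kbonacci.simps)
    also have "\<dots> = kb_psum k (x - 1) - kb_psum k (x - int k - 1)"
      using sum_Suc_diff[of 1 k "\<lambda>i. - kb_psum k (x - int i)"] by (simp add: algebra_simps)
    also have "\<dots> = kb_psum k x - kb_psum k (x - 1)"
      using kb_psum_rec[OF 3] by simp
    finally show ?thesis .
  qed
qed

lemma two_kbonacci_eq_kb_psum_diff:
  assumes "0 < x"
  shows "2 * kbonacci k x = kb_psum k x - kb_psum k (x - int k - 1)"
  using kbonacci_eq_kb_psum_diff[of k x] kb_psum_rec[OF assms, of k] by simp

lemma sum_lessThan_kb_term_eq_kb_psum: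
  "(\<Sum>j<n div (k + 1). kb_term k (n - (k + 1)) j) = kb_psum k (int n - int k - 1)"
proof (cases "k + 1 \<le> n")
  case True
  then have "n div (k + 1) = Suc ((n - (k + 1)) div (k + 1))"
    by (simp add: le_div_geq)
  moreover have "int n - int k - 1 = int (n - (k + 1))"
    using True by simp
  ultimately show ?thesis
    by (simp add: lessThan_Suc_atMost sum_kb_term_eq_kb_psum del: sum.lessThan_Suc)
qed (simp add: kb_psum_def)

lemma kb_summand_Suc:
  assumes "Suc j * (k + 1) \<le> n"
  shows "(-1) ^ Suc j * ((real (n - Suc j * k) + real (Suc j)) / (2 * real (n - Suc j * k)))
      * real ((n - Suc j * k) choose Suc j) * 2 ^ (n - Suc j * (k + 1))
    = (of_int (kb_term k n (Suc j)) - of_int (kb_term k (n - (k + 1)) j)) / 2"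
proof -
  have "0 < n - Suc j * k"
    using assms by (simp add: algebra_simps)
  then obtain m where m: "n - Suc j * k = Suc m"
    using gr0_implies_Suc by blast
  define e where "e = n - Suc j * (k + 1)"
  have shifted: "n - (k + 1) - j * k = m" "n - (k + 1) - j * (k + 1) = e"
    using assms m by (simp_all add: e_def algebra_simps)
  have rhs: "(of_int (kb_term k n (Suc j)) - of_int (kb_term k (n - (k + 1)) j)) / 2
      = (-1) ^ Suc j * 2 ^ e * ((real (Suc m choose Suc j) + real (m choose j)) / 2)"
    unfolding kb_term_def m shifted e_def[symmetric] by (simp add: algebra_simps diff_divide_distrib)
  show ?thesis
    unfolding rhs m e_def[symmetric] weighted_binomial_eq_average[symmetric]
    by (simp only: ac_simps)
qed

lemma sum_kb_summand:
  assumes "0 < n"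
  shows "(\<Sum>j\<le>n div (k + 1). (-1) ^ j * ((real (n - j * k) + real j) / (2 * real (n - j * k)))
      * real ((n - j * k) choose j) * 2 ^ (n - j * (k + 1)))
    = of_int (kb_psum k (int n) - kb_psum k (int n - int k - 1)) / 2"
    (is "sum ?s {..?J} = _")
proof -
  have s0: "?s 0 = of_int (kb_term k n 0) / 2"
    using assms by (simp add: kb_term_def field_simps)
  have s_Suc: "?s (Suc j) = (of_int (kb_term k n (Suc j)) - of_int (kb_term k (n - (k + 1)) j)) / 2"
    if "j \<in> {..<?J}" for j
  proof -
    have "Suc j * (k + 1) \<le> n"
      using that less_eq_div_iff_mult_less_eq[of "k + 1" "Suc j" n] by simp
    then show ?thesis
      by (rule kb_summand_Suc)
  qed
  have "sum ?s {..?J} = of_int (kb_term k n 0) / 2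
      + (\<Sum>j<?J. (of_int (kb_term k n (Suc j)) - of_int (kb_term k (n - (k + 1)) j)) / 2)"
    unfolding sum.atMost_shift by (simp only: s0 s_Suc cong: sum.cong)
  also have "\<dots> = of_int ((\<Sum>j\<le>?J. kb_term k n j) - (\<Sum>j<?J. kb_term k (n - (k + 1)) j)) / 2"
    by (simp add: sum.atMost_shift sum_subtractf field_simps flip: sum_divide_distrib)
  also have "\<dots> = of_int (kb_psum k (int n) - kb_psum k (int n - int k - 1)) / 2"
    unfolding sum_kb_term_eq_kb_psum[OF order_refl] sum_lessThan_kb_term_eq_kb_psum ..
  finally show ?thesis .
qed

theorem corollary3p2:
  fixes k n :: nat
  assumes "k \<ge> 1"
  shows "real_of_int (kbonacci k (int n)) =
    (\<Sum>j = 0..nat \<lfloor>real n / real (k + 1)\<rfloor>.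
       (-1) ^ j
       * ((real (n - j * k) + real j + (if n = 0 then 1 else 0))
          / (2 * real (n - j * k) + (if n = 0 then 1 else 0)))
       * real ((n - j * k) choose j)
       * 2 ^ (n - j * (k + 1)))"
proof (cases "n = 0")
  case True
  then show ?thesis
    by (simp add: kbonacci.simps)
next
  case False
  have "nat \<lfloor>real n / real (k + 1)\<rfloor> = n div (k + 1)"
    using floor_divide_of_nat_eq[of n "k + 1", where 'a = real] by simp
  moreover have "2 * kbonacci k (int n) = kb_psum k (int n) - kb_psum k (int n - int k - 1)"
    using False by (intro two_kbonacci_eq_kb_psum_diff) simp
  ultimately show ?thesis
    using False sum_kb_summand[of n k] by (simp add: atLeast0AtMost)
qed

end
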